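(* If $f\in\mathrm{BV}^1$ then for every $n\ge1$, \[ n\,\|B_n(f)-f\|_\infty\le \frac{T_{f'}[-1,1]}{2}+\max\{\|O(f)\|_\infty,\|E(f)\|_\infty\}, \] where $T_{f'}[-1,1]$ is the total variation of $f'$ on $[-1,1]$.
   Context: Nodes: $x_{k,n}:=2k/n-1$, $k=0,\dots,n$. $B_n(f,x):=N_n(f,x)/D_n(x)$ for $x$ not a node, $B_n(f,x_{k,n}):=f(x_{k,n})$, where $N_n(f,x)=\sum_{k=0}^n(-1)^k\frac{f(x_{k,n})}{x-x_{k,n}}$ and $D_n(x)=\sum_{k=0}^n(-1)^k\frac{1}{x-x_{k,n}}$. $\mathrm{BV}^1$: functions $f:[-1,1]\to\mathbb{R}$ differentiable at every point of $[-1,1]$ (one-sided at $\pm1$) whose derivative $f'$ has bounded variation on $[-1,1]$. For $x\in(-1,1)$, $O(f,x):=\frac{f(x)-f(1)}{2(x-1)}-\frac{f(x)-f(-1)}{2(x+1)}$ and $E(f,x):=\frac{f(1)-f(x)}{2(x-1)}+\frac{f(-1)-f(x)}{2(x+1)}$; $\|O(f)\|_\infty,\|E(f)\|_\infty$ are suprema over $x\in(-1,1)$, and $\|B_n(f)-f\|_\infty=\sup_{x\in[-1,1]}|B_n(f,x)-f(x)|$. *)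

theory Defs
  imports "HOL-Analysis.Analysis"
begin

definition node :: "nat \<Rightarrow> nat \<Rightarrow> real" where
  "node n k = 2 * real k / real n - 1"

definition Bnum :: "nat \<Rightarrow> (real \<Rightarrow> real) \<Rightarrow> real \<Rightarrow> real" where
  "Bnum n f x = (\<Sum>k\<le>n. (-1) ^ k * f (node n k) / (x - node n k))"

definition Bden :: "nat \<Rightarrow> real \<Rightarrow> real" where
  "Bden n x = (\<Sum>k\<le>n. (-1) ^ k / (x - node n k))"

definition berrut :: "nat \<Rightarrow> (real \<Rightarrow> real) \<Rightarrow> real \<Rightarrow> real" where
  "berrut n f x = (if \<exists>k\<le>n. x = node n k then f x else Bnum n f x / Bden n x)"

definition var_sum :: "(real \<Rightarrow> real) \<Rightarrow> real list \<Rightarrow> real" where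
  "var_sum g xs = (\<Sum>i<length xs - 1. \<bar>g (xs ! Suc i) - g (xs ! i)\<bar>)"

definition var_sums :: "(real \<Rightarrow> real) \<Rightarrow> real \<Rightarrow> real \<Rightarrow> real set" where
  "var_sums g a b = {var_sum g xs | xs. sorted xs \<and> set xs \<subseteq> {a..b}}"

definition bounded_variation :: "(real \<Rightarrow> real) \<Rightarrow> real \<Rightarrow> real \<Rightarrow> bool" where
  "bounded_variation g a b \<longleftrightarrow> bdd_above (var_sums g a b)"

definition total_variation :: "(real \<Rightarrow> real) \<Rightarrow> real \<Rightarrow> real \<Rightarrow> real" where
  "total_variation g a b = Sup (var_sums g a b)"

definition Ofun :: "(real \<Rightarrow> real) \<Rightarrow> real \<Rightarrow> real" where
  "Ofun f x = (f x - f 1) / (2 * (x - 1)) - (f x - f (-1)) / (2 * (x + 1))"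

definition Efun :: "(real \<Rightarrow> real) \<Rightarrow> real \<Rightarrow> real" where
  "Efun f x = (f 1 - f x) / (2 * (x - 1)) + (f (-1) - f x) / (2 * (x + 1))"

definition sup_norm :: "(real \<Rightarrow> real) \<Rightarrow> real set \<Rightarrow> real" where
  "sup_norm g S = Sup ((\<lambda>x. \<bar>g x\<bar>) ` S)"

end

theory Submission
  imports Defs
begin

text \<open>Write a_k for the divided difference f[x, x_k]. Then B_n(f,x) - f(x) = -(\<Sum>_k (-1)^k a_k) / D_n(x),
  and |D_n(x)| \<ge> n because, split at the nodes enclosing x, D_n(x) is a pair of alternating sums of
  decreasing reciprocals. Summation by parts gives
  2 \<Sum>_k (-1)^k a_k = a_0 + (-1)^n a_n + \<Sum>_k (-1)^k (a_k - a_{k+1}); the boundary term is -2 E(f,x) or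
  -2 O(f,x) according to the parity of n, and the remaining sum is at most T_{f'}[-1,1] because
  a_k = \<integral>_0^1 f'(x + s (x_k - x)) ds and, for fixed s, these points are monotone in k.\<close>

lemma var_sum_le_total_variation:
  assumes "bounded_variation g a b" and "sorted xs" and "set xs \<subseteq> {a..b}"
  shows "var_sum g xs \<le> total_variation g a b"
  unfolding total_variation_def
  by (rule cSup_upper) (use assms in \<open>auto simp: var_sums_def bounded_variation_def\<close>)

lemma total_variation_nonneg:
  assumes "bounded_variation g a b"
  shows "0 \<le> total_variation g a b"
  using var_sum_le_total_variation[OF assms, of "[]"] by (simp add: var_sum_def)

lemma abs_diff_le_total_variation:
  assumes "bounded_variation g a b" and "t \<in> {a..b}"
  shows "\<bar>g t - g a\<bar> \<le> total_variation g a b"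
  using var_sum_le_total_variation[OF assms(1), of "[a, t]"] assms(2) by (simp add: var_sum_def)

lemma abs_le_sup_norm:
  assumes "bdd_above ((\<lambda>x. \<bar>g x\<bar>) ` S)" and "x \<in> S"
  shows "\<bar>g x\<bar> \<le> sup_norm g S"
  unfolding sup_norm_def using assms by (intro cSup_upper) auto

lemma sup_norm_le:
  assumes "S \<noteq> {}" and "\<And>x. x \<in> S \<Longrightarrow> \<bar>g x\<bar> \<le> C"
  shows "sup_norm g S \<le> C"
  unfolding sup_norm_def using assms by (intro cSup_least) auto

lemma segment_point_in_interval:
  fixes a b z t s :: real
  assumes "z \<in> {a..b}" and "t \<in> {a..b}" and "s \<in> {0..1}"
  shows "z + s * (t - z) \<in> {a..b}"
proof -
  have "z + s * (t - z) = (1 - s) * z + s * t" by (simp add: algebra_simps)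
  then show ?thesis
    using assms convexD_alt[OF convex_real_interval(5), of z a b t s] by auto
qed

definition divided_diff :: "(real \<Rightarrow> real) \<Rightarrow> real \<Rightarrow> real \<Rightarrow> real" where
  "divided_diff f x t = (f t - f x) / (t - x)"

lemma divided_diff_alt: "divided_diff f x t = (f x - f t) / (x - t)"
  unfolding divided_diff_def by (metis minus_diff_eq minus_divide_divide)

lemma half_divided_diff: "(f x - f t) / (2 * (x - t)) = divided_diff f x t / 2"
  by (simp add: divided_diff_alt mult.commute)

lemma divided_diff_has_integral:
  fixes f f' :: "real \<Rightarrow> real"
  assumes deriv: "\<And>x. x \<in> {a..b} \<Longrightarrow> (f has_real_derivative f' x) (at x within {a..b})"
    and z: "z \<in> {a..b}" and t: "t \<in> {a..b}" and "t \<noteq> z"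
  shows "((\<lambda>s. f' (z + s * (t - z))) has_integral divided_diff f z t) {0..1}"
proof -
  define p where "p s = z + s * (t - z)" for s
  have p_in: "p s \<in> {a..b}" if "s \<in> {0..1}" for s
    using segment_point_in_interval[OF z t that] by (simp add: p_def)
  have "((f \<circ> p) has_real_derivative f' (p s) * (t - z)) (at s within {0..1})"
    if "s \<in> {0..1}" for s
  proof (rule DERIV_image_chain)
    show "(f has_real_derivative f' (p s)) (at (p s) within p ` {0..1})"
      using deriv[OF p_in[OF that]] p_in by (blast intro: DERIV_subset)
    show "(p has_real_derivative t - z) (at s within {0..1})"
      unfolding p_def by (auto intro!: derivative_eq_intros)
  qed
  then have "((\<lambda>s. f' (p s) * (t - z)) has_integral f (p 1) - f (p 0)) {0..1}"
    by (intro fundamental_theorem_of_calculus)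
       (auto simp: comp_def has_real_derivative_iff_has_vector_derivative[symmetric])
  from has_integral_mult_right[OF this, of "1 / (t - z)"] show ?thesis
    using \<open>t \<noteq> z\<close> by (simp add: p_def divided_diff_def)
qed

lemma abs_divided_diff_le:
  fixes f f' :: "real \<Rightarrow> real"
  assumes deriv: "\<And>x. x \<in> {a..b} \<Longrightarrow> (f has_real_derivative f' x) (at x within {a..b})"
    and bound: "\<And>x. x \<in> {a..b} \<Longrightarrow> \<bar>f' x\<bar> \<le> M"
    and z: "z \<in> {a..b}" and t: "t \<in> {a..b}"
  shows "\<bar>divided_diff f z t\<bar> \<le> M"
proof (cases "t = z")
  case True
  then show ?thesis using bound[OF z] by (simp add: divided_diff_def)
next
  case False
  have "\<bar>f' (z + s * (t - z))\<bar> \<le> M" if "s \<in> {0..1} - {}" for s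
    using that by (auto intro!: bound segment_point_in_interval[OF z t])
  with has_integral_bound_real[OF _ finite.emptyI divided_diff_has_integral[OF deriv z t False]]
  show ?thesis using bound[OF z] by fastforce
qed

lemma divided_diff_variation_le:
  fixes f f' y :: "_ \<Rightarrow> real"
  assumes deriv: "\<And>x. x \<in> {a..b} \<Longrightarrow> (f has_real_derivative f' x) (at x within {a..b})"
    and bv: "bounded_variation f' a b"
    and y_mono: "mono_on {..n} y" and y_in: "\<And>k. k \<le> n \<Longrightarrow> y k \<in> {a..b}"
    and x: "x \<in> {a..b}" and x_ne: "\<And>k. k \<le> n \<Longrightarrow> y k \<noteq> x"
  shows "(\<Sum>k<n. \<bar>divided_diff f x (y (Suc k)) - divided_diff f x (y k)\<bar>) \<le> total_variation f' a b"
proof -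
  define D where "D k = divided_diff f x (y (Suc k)) - divided_diff f x (y k)" for k
  define w where "w s k = x + s * (y k - x)" for s k
  have "((\<lambda>s. f' (w s (Suc k)) - f' (w s k)) has_integral D k) {0..1}" if "k < n" for k
    unfolding D_def w_def using that
    by (intro has_integral_diff divided_diff_has_integral[OF deriv x] y_in x_ne) auto
  then have "((\<lambda>s. \<Sum>k<n. sgn (D k) * (f' (w s (Suc k)) - f' (w s k))) has_integral
               (\<Sum>k<n. sgn (D k) * D k)) {0..1}"
    by (intro has_integral_sum has_integral_mult_right) auto
  moreover have "((\<lambda>s::real. total_variation f' a b) has_integral total_variation f' a b) {0..1}"
    using has_integral_const_real[of "total_variation f' a b" 0 1] by simp
  moreover have "(\<Sum>k<n. sgn (D k) * (f' (w s (Suc k)) - f' (w s k))) \<le> total_variation f' a b"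
    if s: "s \<in> {0..1}" for s
  proof -
    have "(\<Sum>k<n. sgn (D k) * (f' (w s (Suc k)) - f' (w s k))) \<le> (\<Sum>k<n. \<bar>f' (w s (Suc k)) - f' (w s k)\<bar>)"
      by (intro sum_mono) (auto simp: sgn_if)
    also have "\<dots> = var_sum f' (map (w s) [0..<Suc n])"
      unfolding var_sum_def by (rule sum.cong) (auto simp: nth_append simp del: upt_Suc)
    also have "\<dots> \<le> total_variation f' a b"
    proof (rule var_sum_le_total_variation[OF bv])
      show "sorted (map (w s) [0..<Suc n])"
        using s y_mono
        by (auto simp: sorted_iff_nth_mono w_def mono_on_def intro!: mult_left_mono simp del: upt_Suc)
      show "set (map (w s) [0..<Suc n]) \<subseteq> {a..b}"
        using s by (auto simp: w_def simp del: upt_Suc intro!: segment_point_in_interval x y_in)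
    qed
    finally show ?thesis .
  qed
  ultimately have "(\<Sum>k<n. sgn (D k) * D k) \<le> total_variation f' a b"
    by (rule has_integral_le)
  moreover have "sgn (D k) * D k = \<bar>D k\<bar>" for k
    by (simp add: sgn_mult_abs abs_sgn)
  ultimately show ?thesis by (simp add: D_def)
qed

lemma alternating_sum_bounds:
  fixes c :: "nat \<Rightarrow> real"
  assumes "\<And>i. c (Suc i) \<le> c i" and "\<And>i. 0 \<le> c i"
  shows "0 \<le> (\<Sum>i\<le>m. (-1) ^ i * c i) \<and> (\<Sum>i\<le>m. (-1) ^ i * c i) \<le> c 0"
  using assms
proof (induction m arbitrary: c)
  case 0
  then show ?case by simp
next
  case (Suc m)
  have "(\<Sum>i\<le>Suc m. (-1) ^ i * c i) = c 0 - (\<Sum>i\<le>m. (-1) ^ i * c (Suc i))"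
    by (subst sum.atMost_Suc_shift) (simp add: sum_negf[symmetric])
  moreover have "0 \<le> (\<Sum>i\<le>m. (-1) ^ i * c (Suc i)) \<and> (\<Sum>i\<le>m. (-1) ^ i * c (Suc i)) \<le> c 1"
    using Suc.IH[of "\<lambda>i. c (Suc i)"] Suc.prems by simp
  ultimately show ?case
    using Suc.prems(1)[of 0] by simp
qed

lemma alternating_sum_ge:
  fixes c :: "nat \<Rightarrow> real"
  assumes "\<And>i. c (Suc i) \<le> c i" and "\<And>i. 0 \<le> c i"
  shows "c 0 - c 1 \<le> (\<Sum>i\<le>m. (-1) ^ i * c i)"
proof (cases m)
  case 0
  then show ?thesis using assms(2)[of 1] by simp
next
  case (Suc k)
  have "(\<Sum>i\<le>Suc k. (-1) ^ i * c i) = c 0 - (\<Sum>i\<le>k. (-1) ^ i * c (Suc i))"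
    by (subst sum.atMost_Suc_shift) (simp add: sum_negf[symmetric])
  with alternating_sum_bounds[of "\<lambda>i. c (Suc i)" k] assms Suc show ?thesis by simp
qed

lemma alternating_sum_summation_by_parts:
  fixes a :: "nat \<Rightarrow> real"
  shows "2 * (\<Sum>k\<le>n. (-1) ^ k * a k) = a 0 + (-1) ^ n * a n + (\<Sum>k<n. (-1) ^ k * (a k - a (Suc k)))"
  by (induction n) (auto simp: algebra_simps)

lemma abs_alternating_sum_le:
  fixes a :: "nat \<Rightarrow> real"
  shows "2 * \<bar>\<Sum>k\<le>n. (-1) ^ k * a k\<bar> \<le> \<bar>a 0 + (-1) ^ n * a n\<bar> + (\<Sum>k<n. \<bar>a (Suc k) - a k\<bar>)"
proof -
  have "2 * \<bar>\<Sum>k\<le>n. (-1) ^ k * a k\<bar> = \<bar>a 0 + (-1) ^ n * a n + (\<Sum>k<n. (-1) ^ k * (a k - a (Suc k)))\<bar>"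
    by (simp flip: alternating_sum_summation_by_parts add: abs_mult)
  also have "\<dots> \<le> \<bar>a 0 + (-1) ^ n * a n\<bar> + \<bar>\<Sum>k<n. (-1) ^ k * (a k - a (Suc k))\<bar>"
    by (rule abs_triangle_ineq)
  also have "\<bar>\<Sum>k<n. (-1) ^ k * (a k - a (Suc k))\<bar> \<le> (\<Sum>k<n. \<bar>a (Suc k) - a k\<bar>)"
    using sum_abs[of "\<lambda>k. (-1) ^ k * (a k - a (Suc k))" "{..<n}"]
    by (simp add: abs_mult abs_minus_commute)
  finally show ?thesis by simp
qed

lemma neg_one_power_diff_mult:
  assumes "i \<le> j"
  shows "(-1) ^ j * (-1) ^ (j - i) = ((-1) ^ i :: 'a :: comm_ring_1)"
proof -
  have "(-1) ^ j = (-1) ^ (j - i) * ((-1) ^ i :: 'a)"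
    using assms by (simp flip: power_add)
  then have "(-1) ^ j * (-1) ^ (j - i) = ((-1) ^ (j - i) * (-1) ^ (j - i)) * ((-1) ^ i :: 'a)"
    by (simp add: ac_simps)
  also have "\<dots> = (-1) ^ i" by (simp flip: power_mult_distrib)
  finally show ?thesis .
qed

lemma neg_one_power_Suc_add_mult:
  shows "(-1) ^ j * (-1) ^ (Suc j + i) = - ((-1) ^ i :: 'a :: comm_ring_1)"
proof -
  have "(-1) ^ (Suc j + i) = - ((-1) ^ j * (-1) ^ i :: 'a)"
    by (simp add: power_add)
  then have "(-1) ^ j * (-1) ^ (Suc j + i) = - (((-1) ^ j * (-1) ^ j) * ((-1) ^ i :: 'a))"
    by (simp add: ac_simps)
  also have "\<dots> = - ((-1) ^ i)" by (simp flip: power_mult_distrib)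
  finally show ?thesis .
qed

lemma alternating_sum_split:
  fixes u :: "nat \<Rightarrow> real"
  assumes "j < n"
  shows "(-1) ^ j * (\<Sum>k\<le>n. (-1) ^ k * u k)
           = (\<Sum>i\<le>j. (-1) ^ i * u (j - i)) - (\<Sum>i\<le>n - Suc j. (-1) ^ i * u (Suc j + i))"
proof -
  have "{..n} = {..j} \<union> {Suc j..n}" using assms by auto
  then have "(\<Sum>k\<le>n. (-1) ^ k * u k) = (\<Sum>k\<le>j. (-1) ^ k * u k) + (\<Sum>k=Suc j..n. (-1) ^ k * u k)"
    by (simp add: sum.union_disjoint)
  also have "(\<Sum>k\<le>j. (-1) ^ k * u k) = (\<Sum>i\<le>j. (-1) ^ (j - i) * u (j - i))"
    using sum.atLeastAtMost_rev[of "\<lambda>k. (-1) ^ k * u k" 0 j] by (simp add: atLeast0AtMost)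
  also have "(\<Sum>k=Suc j..n. (-1) ^ k * u k) = (\<Sum>i\<le>n - Suc j. (-1) ^ (Suc j + i) * u (Suc j + i))"
    using assms by (subst sum.atLeastAtMost_shift_0) (auto simp: atLeast0AtMost)
  finally have "(-1) ^ j * (\<Sum>k\<le>n. (-1) ^ k * u k)
      = (\<Sum>i\<le>j. ((-1) ^ j * (-1) ^ (j - i)) * u (j - i))
        + (\<Sum>i\<le>n - Suc j. ((-1) ^ j * (-1) ^ (Suc j + i)) * u (Suc j + i))"
    by (simp only: distrib_left sum_distrib_left mult.assoc)
  also have "\<dots> = (\<Sum>i\<le>j. (-1) ^ i * u (j - i)) + (\<Sum>i\<le>n - Suc j. - ((-1) ^ i) * u (Suc j + i))"
    by (intro arg_cong2[where f = "(+)"] sum.cong)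
       (auto simp only: atMost_iff neg_one_power_diff_mult neg_one_power_Suc_add_mult)
  finally show ?thesis by (simp only: mult_minus_left sum_negf diff_conv_add_uminus)
qed

lemma alternating_reciprocal_sum_ge:
  fixes c h :: real
  assumes "0 < c" and "0 < h"
  shows "1 / c - 1 / (c + h) \<le> (\<Sum>i\<le>m. (-1) ^ i * (1 / (c + real i * h)))"
proof -
  have "1 / (c + real (Suc i) * h) \<le> 1 / (c + real i * h)" for i
    using assms by (intro divide_left_mono) (auto simp: algebra_simps add_pos_nonneg)
  moreover have "0 \<le> 1 / (c + real i * h)" for i
    using assms by (simp add: add_pos_nonneg less_imp_le)
  ultimately show ?thesis
    using alternating_sum_ge[of "\<lambda>i. 1 / (c + real i * h)" m] by simp
qed

lemma reciprocal_gaps_ge: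
  fixes a b :: real
  assumes "0 < a" and "0 < b"
  shows "2 / (a + b) \<le> (1 / a - 1 / (a + (a + b))) + (1 / b - 1 / (b + (a + b)))"
proof -
  have "1 / (a + (a + b)) \<le> 1 / (2 * a)" and "1 / (b + (a + b)) \<le> 1 / (2 * b)"
    using assms by (simp_all add: frac_le)
  moreover have "1 / a = 1 / (2 * a) + 1 / (2 * a)" and "1 / b = 1 / (2 * b) + 1 / (2 * b)"
    by simp_all
  moreover have "2 / (a + b) \<le> 1 / (2 * a) + 1 / (2 * b)"
  proof -
    have "4 * a * b \<le> (a + b)\<^sup>2"
      using sum_squares_ge_zero[of "a - b" 0] by (simp add: power2_eq_square algebra_simps)
    then show ?thesis using assms by (simp add: field_simps power2_eq_square)
  qed
  ultimately show ?thesis by linarith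
qed

lemma node_diff: "node n k - node n m = (real k - real m) * (2 / real n)"
  by (cases "n = 0") (simp_all add: node_def field_simps)

lemma node_in_interval: "n \<ge> 1 \<Longrightarrow> k \<le> n \<Longrightarrow> node n k \<in> {-1..1}"
  by (simp add: node_def field_simps)

lemma mono_on_node: "mono_on {..n} (node n)"
  by (auto simp: mono_on_def node_def divide_right_mono)

lemma node_0 [simp]: "node n 0 = -1" and node_self [simp]: "n \<ge> 1 \<Longrightarrow> node n n = 1"
  by (simp_all add: node_def)

lemma node_bracket:
  assumes "n \<ge> 1" and "x \<in> {-1<..<1}"
  obtains j where "j < n" and "node n j \<le> x" and "x < node n (Suc j)"
proof -
  define t where "t = (x + 1) * real n / 2"
  define j where "j = nat \<lfloor>t\<rfloor>"
  have "0 < t" "t < real n" using assms by (simp_all add: t_def)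
  then have "real j \<le> t" "t < real j + 1" "j < n" unfolding j_def by linarith+
  moreover have "x = 2 * t / real n - 1" using assms by (simp add: t_def field_simps)
  ultimately show ?thesis
    using assms that[of j] by (simp add: node_def divide_right_mono divide_strict_right_mono)
qed

lemma abs_Bden_ge:
  assumes n: "n \<ge> 1" and x: "x \<in> {-1<..<1}" and not_node: "\<And>k. k \<le> n \<Longrightarrow> x \<noteq> node n k"
  shows "real n \<le> \<bar>Bden n x\<bar>"
proof -
  obtain j where j: "j < n" "node n j \<le> x" "x < node n (Suc j)"
    using node_bracket[OF n x] .
  define h where "h = 2 / real n"
  define a where "a = x - node n j"
  define b where "b = node n (Suc j) - x"
  have "0 < a" using j not_node[of j] by (simp add: a_def)
  have "0 < b" using j by (simp add: b_def)
  have "a + b = h" using node_diff[of n "Suc j" j] by (simp add: a_def b_def h_def)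
  have left: "x - node n (j - i) = a + real i * h" if "i \<le> j" for i
    using node_diff[of n j "j - i"] that by (simp add: a_def h_def of_nat_diff algebra_simps)
  have right: "(-1) ^ i / (x - node n (Suc (j + i))) = - ((-1) ^ i / (b + real i * h))" for i
  proof -
    have "x - node n (Suc (j + i)) = - (b + real i * h)"
      using node_diff[of n "Suc (j + i)" "Suc j"] by (simp add: b_def h_def algebra_simps)
    then show ?thesis by (simp only: minus_divide_right)
  qed
  have "(-1) ^ j * Bden n x
      = (\<Sum>i\<le>j. (-1) ^ i * (1 / (a + real i * h))) + (\<Sum>i\<le>n - Suc j. (-1) ^ i * (1 / (b + real i * h)))"
    using alternating_sum_split[OF j(1), of "\<lambda>k. 1 / (x - node n k)"]
    by (simp add: Bden_def left right sum_negf)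
  also have "\<dots> \<ge> (1 / a - 1 / (a + h)) + (1 / b - 1 / (b + h))"
    using \<open>0 < a\<close> \<open>0 < b\<close> \<open>a + b = h\<close>
    by (intro add_mono alternating_reciprocal_sum_ge) auto
  also have "(1 / a - 1 / (a + h)) + (1 / b - 1 / (b + h)) \<ge> 2 / h"
    using reciprocal_gaps_ge[OF \<open>0 < a\<close> \<open>0 < b\<close>] \<open>a + b = h\<close> by simp
  finally have "real n \<le> (-1) ^ j * Bden n x" using n by (simp add: h_def)
  then show ?thesis
    using abs_ge_self[of "(-1) ^ j * Bden n x"] by (simp add: abs_mult)
qed

lemma Bnum_minus_Bden:
  "Bnum n f x - f x * Bden n x = - (\<Sum>k\<le>n. (-1) ^ k * divided_diff f x (node n k))"
  unfolding Bnum_def Bden_def sum_distrib_left sum_negf[symmetric] sum_subtractf[symmetric]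
  by (rule sum.cong) (simp_all add: divided_diff_alt diff_divide_distrib algebra_simps)

lemma divided_diff_endpoints_Ofun: "divided_diff f x 1 - divided_diff f x (-1) = 2 * Ofun f x"
proof -
  have "Ofun f x = divided_diff f x 1 / 2 - divided_diff f x (-1) / 2"
    unfolding Ofun_def half_divided_diff[symmetric] by simp
  then show ?thesis by simp
qed

lemma divided_diff_endpoints_Efun: "divided_diff f x 1 + divided_diff f x (-1) = - 2 * Efun f x"
proof -
  have "Efun f x = - (divided_diff f x 1 / 2) - divided_diff f x (-1) / 2"
    unfolding Efun_def half_divided_diff[symmetric] by (simp add: minus_divide_left)
  then show ?thesis by simp
qed

lemma abs_Ofun_Efun_le:
  assumes "\<bar>divided_diff f x 1\<bar> \<le> M" and "\<bar>divided_diff f x (-1)\<bar> \<le> M"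
  shows "\<bar>Ofun f x\<bar> \<le> M" and "\<bar>Efun f x\<bar> \<le> M"
  using assms divided_diff_endpoints_Ofun[of f x] divided_diff_endpoints_Efun[of f x] by arith+

lemma berrut_error_le:
  fixes f f' :: "real \<Rightarrow> real"
  assumes deriv: "\<And>x. x \<in> {-1..1} \<Longrightarrow> (f has_real_derivative f' x) (at x within {-1..1})"
    and bv: "bounded_variation f' (-1) 1" and n: "n \<ge> 1"
    and x: "x \<in> {-1..1}" and not_node: "\<And>k. k \<le> n \<Longrightarrow> x \<noteq> node n k"
  shows "real n * \<bar>berrut n f x - f x\<bar>
           \<le> total_variation f' (-1) 1 / 2 + max \<bar>Ofun f x\<bar> \<bar>Efun f x\<bar>"
proof -
  define a where "a k = divided_diff f x (node n k)" for k
  have "x \<in> {-1<..<1}"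
    using x not_node[of 0] not_node[of n] n by auto
  then have Bden: "real n \<le> \<bar>Bden n x\<bar>"
    using abs_Bden_ge[OF n _ not_node] by blast
  have "berrut n f x - f x = - (\<Sum>k\<le>n. (-1) ^ k * a k) / Bden n x"
    using not_node Bden n Bnum_minus_Bden[of n f x]
    by (auto simp: berrut_def a_def field_simps)
  then have "real n * \<bar>berrut n f x - f x\<bar> = real n * \<bar>\<Sum>k\<le>n. (-1) ^ k * a k\<bar> / \<bar>Bden n x\<bar>"
    by (simp add: abs_divide)
  also have "\<dots> \<le> \<bar>Bden n x\<bar> * \<bar>\<Sum>k\<le>n. (-1) ^ k * a k\<bar> / \<bar>Bden n x\<bar>"
    using Bden by (intro divide_right_mono mult_right_mono) auto
  finally have "real n * \<bar>berrut n f x - f x\<bar> \<le> \<bar>\<Sum>k\<le>n. (-1) ^ k * a k\<bar>"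
    using Bden n by simp
  moreover have "\<bar>a 0 + (-1) ^ n * a n\<bar> \<le> 2 * max \<bar>Ofun f x\<bar> \<bar>Efun f x\<bar>"
    using divided_diff_endpoints_Ofun[of f x] divided_diff_endpoints_Efun[of f x] n
    by (cases "even n") (auto simp: a_def abs_mult)
  moreover have "(\<Sum>k<n. \<bar>a (Suc k) - a k\<bar>) \<le> total_variation f' (-1) 1"
    unfolding a_def
    using divided_diff_variation_le[OF deriv bv mono_on_node node_in_interval[OF n] x] not_node
    by metis
  ultimately show ?thesis
    using abs_alternating_sum_le[where n = n and a = a] by linarith
qed

lemma bdd_above_abs_Ofun_Efun:
  fixes f f' :: "real \<Rightarrow> real"
  assumes deriv: "\<And>x. x \<in> {-1..1} \<Longrightarrow> (f has_real_derivative f' x) (at x within {-1..1})"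
    and bv: "bounded_variation f' (-1) 1"
  shows "bdd_above ((\<lambda>x. \<bar>Ofun f x\<bar>) ` {-1<..<1})" and "bdd_above ((\<lambda>x. \<bar>Efun f x\<bar>) ` {-1<..<1})"
proof -
  define M where "M = \<bar>f' (-1)\<bar> + total_variation f' (-1) 1"
  have "\<bar>divided_diff f x t\<bar> \<le> M" if "x \<in> {-1..1}" "t \<in> {-1..1}" for x t
    using abs_divided_diff_le[OF deriv _ that] abs_diff_le_total_variation[OF bv]
    by (force simp: M_def)
  then have "\<bar>Ofun f x\<bar> \<le> M" "\<bar>Efun f x\<bar> \<le> M" if "x \<in> {-1<..<1}" for x
    using that by (auto intro!: abs_Ofun_Efun_le)
  then show "bdd_above ((\<lambda>x. \<bar>Ofun f x\<bar>) ` {-1<..<1})" "bdd_above ((\<lambda>x. \<bar>Efun f x\<bar>) ` {-1<..<1})"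
    by (auto intro!: bdd_aboveI[of _ M])
qed

lemma berrut_error_le_sup_norms:
  fixes f f' :: "real \<Rightarrow> real"
  assumes deriv: "\<And>x. x \<in> {-1..1} \<Longrightarrow> (f has_real_derivative f' x) (at x within {-1..1})"
    and bv: "bounded_variation f' (-1) 1" and n: "n \<ge> 1" and x: "x \<in> {-1..1}"
  shows "real n * \<bar>berrut n f x - f x\<bar>
           \<le> total_variation f' (-1) 1 / 2
             + max (sup_norm (Ofun f) {-1<..<1}) (sup_norm (Efun f) {-1<..<1})"
    (is "_ \<le> ?C")
proof (cases "\<exists>k\<le>n. x = node n k")
  case True
  have "0 \<le> sup_norm (Ofun f) {-1<..<1}"
    using abs_le_sup_norm[OF bdd_above_abs_Ofun_Efun(1)[OF deriv bv], of 0] by simp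
  then have "0 \<le> ?C"
    using total_variation_nonneg[OF bv] by linarith
  with True show ?thesis by (simp add: berrut_def)
next
  case False
  then have "x \<in> {-1<..<1}"
    using x n node_0[of n] node_self[OF n] by fastforce
  then have "\<bar>Ofun f x\<bar> \<le> sup_norm (Ofun f) {-1<..<1}" "\<bar>Efun f x\<bar> \<le> sup_norm (Efun f) {-1<..<1}"
    by (auto intro!: abs_le_sup_norm bdd_above_abs_Ofun_Efun[OF deriv bv])
  with berrut_error_le[OF deriv bv n x] False show ?thesis
    by fastforce
qed

theorem theorem3:
  fixes f f' :: "real \<Rightarrow> real" and n :: nat
  assumes deriv: "\<And>x. x \<in> {-1..1} \<Longrightarrow> (f has_real_derivative f' x) (at x within {-1..1})"
    and bv: "bounded_variation f' (-1) 1"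
    and n: "n \<ge> 1"
  shows "real n * sup_norm (\<lambda>x. berrut n f x - f x) {-1..1}
           \<le> total_variation f' (-1) 1 / 2
             + max (sup_norm (Ofun f) {-1<..<1}) (sup_norm (Efun f) {-1<..<1})"
proof -
  have "sup_norm (\<lambda>x. berrut n f x - f x) {-1..1}
          \<le> (total_variation f' (-1) 1 / 2
               + max (sup_norm (Ofun f) {-1<..<1}) (sup_norm (Efun f) {-1<..<1})) / real n"
    using n berrut_error_le_sup_norms[OF deriv bv n]
    by (intro sup_norm_le) (auto simp: field_simps)
  then show ?thesis
    using n by (simp add: field_simps)
qed

end
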